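(* If a conjunctive query $Q$ without self-joins contains a vacuum relation, then $Q$ contains no hard structure.
   Context: CQ $Q(\mathbf{A}) :- R_1(\mathbb{A}_1),\dots,R_p(\mathbb{A}_p)$ with distinct relation symbols, $\mathrm{attr}(R_i)=\mathbb{A}_i$, $\mathrm{attr}(Q)=\bigcup_i\mathbb{A}_i$, $\mathrm{head}(Q)=\mathbf{A}$; a relation is vacuum if its attribute set is empty. Standing assumption: distinct relations have distinct attribute sets. $R_j$ is exogenous if another relation $R_i$ has $\mathrm{attr}(R_i)\subsetneq\mathrm{attr}(R_j)$, endogenous otherwise. A path between relations using only attributes in $S$ is a sequence of relations with consecutive ones sharing an attribute of $S$. Triad-like structure: three endogenous relations such that each pair is joined by a path using only attributes in $\mathrm{attr}(Q)\setminus(\mathrm{head}(Q)\cup\mathrm{attr}(R))$, $R$ the third. $R_j$ is dominated by $R_i$ if (1) $\mathrm{attr}(R_i)\subseteq\mathrm{attr}(R_j)$; (2) for every $R_k$ with $\mathrm{attr}(R_i)\setminus\mathrm{attr}(R_k)\ne\emptyset$, $\mathrm{attr}(R_j)\cap\mathrm{attr}(R_k)\subseteq\mathrm{attr}(R_i)\cap\mathrm{head}(Q)$; (3) $\mathrm{attr}(R_i)\subseteq\mathrm{head}(Q)$ or $\mathrm{head}(Q)\subseteq\mathrm{attr}(R_i)$; non-dominated relations are dominated by no other relation. Strand: two non-dominated relations $R_i,R_j$ with $\mathrm{head}(Q)\cap\mathrm{attr}(R_i)\ne\mathrm{head}(Q)\cap\mathrm{attr}(R_j)$ and $(\mathrm{attr}(R_i)\cap\mathrm{attr}(R_j))\setminus\mathrm{head}(Q)\ne\emptyset$.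 The head join of non-dominated relations is the full query of non-dominated relations restricted to $\mathrm{head}(Q)$; a full query is hierarchical if for all attributes $A,B$ the sets of relations containing them are nested or disjoint. $Q$ contains a hard structure if it has a triad-like structure or a strand, or the head join of its non-dominated relations is non-hierarchical. *)

theory Defs
  imports Main
begin

text \<open>A self-join-free conjunctive query: a finite set I of (distinct) relation symbols,
each with a finite attribute set att i, and a head attribute set H.
attr(Q) is the union of all attribute sets.\<close>

definition cq :: "'i set \<Rightarrow> ('i \<Rightarrow> 'a set) \<Rightarrow> 'a set \<Rightarrow> bool" where
  "cq I att H \<longleftrightarrow> finite I \<and> (\<forall>i\<in>I. finite (att i)) \<and> H \<subseteq> (\<Union>i\<in>I. att i)
     \<and> inj_on att I"
  \<comment> \<open>inj_on att I: standing assumption that distinct relations have distinct attribute sets\<close>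

definition attrQ :: "'i set \<Rightarrow> ('i \<Rightarrow> 'a set) \<Rightarrow> 'a set" where
  "attrQ I att = (\<Union>i\<in>I. att i)"

definition vacuum :: "('i \<Rightarrow> 'a set) \<Rightarrow> 'i \<Rightarrow> bool" where
  "vacuum att i \<longleftrightarrow> att i = {}"

definition exogenous :: "'i set \<Rightarrow> ('i \<Rightarrow> 'a set) \<Rightarrow> 'i \<Rightarrow> bool" where
  "exogenous I att j \<longleftrightarrow> j \<in> I \<and> (\<exists>i\<in>I. att i \<subset> att j)"

definition endogenous :: "'i set \<Rightarrow> ('i \<Rightarrow> 'a set) \<Rightarrow> 'i \<Rightarrow> bool" where
  "endogenous I att j \<longleftrightarrow> j \<in> I \<and> \<not> exogenous I att j"

definition path_step :: "'i set \<Rightarrow> ('i \<Rightarrow> 'a set) \<Rightarrow> 'a set \<Rightarrow> 'i \<Rightarrow> 'i \<Rightarrow> bool" where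
  "path_step I att S r r' \<longleftrightarrow> r \<in> I \<and> r' \<in> I \<and> att r \<inter> att r' \<inter> S \<noteq> {}"

definition has_path :: "'i set \<Rightarrow> ('i \<Rightarrow> 'a set) \<Rightarrow> 'a set \<Rightarrow> 'i \<Rightarrow> 'i \<Rightarrow> bool" where
  "has_path I att S i j \<longleftrightarrow> i \<in> I \<and> j \<in> I \<and> (path_step I att S)\<^sup>*\<^sup>* i j"

definition triad_like :: "'i set \<Rightarrow> ('i \<Rightarrow> 'a set) \<Rightarrow> 'a set \<Rightarrow> bool" where
  "triad_like I att H \<longleftrightarrow> (\<exists>r1 r2 r3.
     r1 \<noteq> r2 \<and> r2 \<noteq> r3 \<and> r1 \<noteq> r3 \<and>
     endogenous I att r1 \<and> endogenous I att r2 \<and> endogenous I att r3 \<and>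
     has_path I att (attrQ I att - (H \<union> att r3)) r1 r2 \<and>
     has_path I att (attrQ I att - (H \<union> att r1)) r2 r3 \<and>
     has_path I att (attrQ I att - (H \<union> att r2)) r1 r3)"

text \<open>dominated I att H j i: relation j is dominated by relation i.\<close>
definition dominated :: "'i set \<Rightarrow> ('i \<Rightarrow> 'a set) \<Rightarrow> 'a set \<Rightarrow> 'i \<Rightarrow> 'i \<Rightarrow> bool" where
  "dominated I att H j i \<longleftrightarrow> i \<in> I \<and> j \<in> I \<and> i \<noteq> j \<and>
     att i \<subseteq> att j \<and>
     (\<forall>k\<in>I. att i - att k \<noteq> {} \<longrightarrow> att j \<inter> att k \<subseteq> att i \<inter> H) \<and>
     (att i \<subseteq> H \<or> H \<subseteq> att i)"

definition non_dominated :: "'i set \<Rightarrow> ('i \<Rightarrow> 'a set) \<Rightarrow> 'a set \<Rightarrow> 'i \<Rightarrow> bool" where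
  "non_dominated I att H j \<longleftrightarrow> j \<in> I \<and> \<not> (\<exists>i\<in>I. dominated I att H j i)"

definition strand :: "'i set \<Rightarrow> ('i \<Rightarrow> 'a set) \<Rightarrow> 'a set \<Rightarrow> bool" where
  "strand I att H \<longleftrightarrow> (\<exists>i j. non_dominated I att H i \<and> non_dominated I att H j \<and>
     H \<inter> att i \<noteq> H \<inter> att j \<and> (att i \<inter> att j) - H \<noteq> {})"

definition hierarchical :: "'i set \<Rightarrow> ('i \<Rightarrow> 'a set) \<Rightarrow> bool" where
  "hierarchical J att' \<longleftrightarrow> (\<forall>A B.
     let RA = {i\<in>J. A \<in> att' i}; RB = {i\<in>J. B \<in> att' i} in
     RA \<subseteq> RB \<or> RB \<subseteq> RA \<or> RA \<inter> RB = {})"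

text \<open>Head join: the full query of the non-dominated relations, restricted to the head attributes.\<close>
definition head_join_hierarchical :: "'i set \<Rightarrow> ('i \<Rightarrow> 'a set) \<Rightarrow> 'a set \<Rightarrow> bool" where
  "head_join_hierarchical I att H \<longleftrightarrow>
     hierarchical {i\<in>I. non_dominated I att H i} (\<lambda>i. att i \<inter> H)"

definition hard_structure :: "'i set \<Rightarrow> ('i \<Rightarrow> 'a set) \<Rightarrow> 'a set \<Rightarrow> bool" where
  "hard_structure I att H \<longleftrightarrow>
     triad_like I att H \<or> strand I att H \<or> \<not> head_join_hierarchical I att H"

end

theory Submission
  imports Defs
begin

text \<open>Distinct relations have distinct attribute sets, so a vacuum relation \<open>v\<close> is the only
relation whose attribute set is empty. Hence every other relation is exogenous (its attribute set
properly contains \<open>att v\<close>) and is dominated by \<open>v\<close>: condition (2) of dominance is vacuous because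
\<open>att v - att k\<close> is always empty, and \<open>att v \<subseteq> H\<close>. A triad-like structure needs three distinct
endogenous relations and a strand two distinct non-dominated ones, while a head join over a single
relation is trivially hierarchical.\<close>

lemma endogenous_imp_eq_vacuum:
  assumes "inj_on att I" and "v \<in> I" and "vacuum att v" and "endogenous I att j"
  shows "j = v"
proof -
  have "j \<in> I" and "\<not> att v \<subset> att j"
    using assms(2,4) unfolding endogenous_def exogenous_def by auto
  then have "att j = att v"
    using assms(3) unfolding vacuum_def by blast
  then show ?thesis
    using assms(1,2) \<open>j \<in> I\<close> by (simp add: inj_on_eq_iff)
qed

lemma dominated_by_vacuum:
  assumes "v \<in> I" and "vacuum att v" and "j \<in> I" and "j \<noteq> v"
  shows "dominated I att H j v"
  using assms unfolding dominated_def vacuum_def by simp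

lemma non_dominated_imp_eq_vacuum:
  assumes "v \<in> I" and "vacuum att v" and "non_dominated I att H j"
  shows "j = v"
proof (rule ccontr)
  assume "j \<noteq> v"
  moreover have "j \<in> I"
    using assms(3) unfolding non_dominated_def by blast
  ultimately have "dominated I att H j v"
    using assms(1,2) by (intro dominated_by_vacuum)
  then show False
    using assms(1,3) unfolding non_dominated_def by blast
qed

lemma not_triad_like_if_unique_endogenous:
  assumes "\<And>j. endogenous I att j \<Longrightarrow> j = v"
  shows "\<not> triad_like I att H"
  using assms unfolding triad_like_def by metis

lemma not_strand_if_unique_non_dominated:
  assumes "\<And>j. non_dominated I att H j \<Longrightarrow> j = v"
  shows "\<not> strand I att H"
  using assms unfolding strand_def by metis

lemma hierarchical_subsingleton:
  assumes "J \<subseteq> {v}"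
  shows "hierarchical J att'"
  unfolding hierarchical_def Let_def
proof (intro allI)
  fix A B
  let ?RA = "{i\<in>J. A \<in> att' i}" and ?RB = "{i\<in>J. B \<in> att' i}"
  have "?RA \<subseteq> {v}" and "?RB \<subseteq> {v}"
    using assms by auto
  then show "?RA \<subseteq> ?RB \<or> ?RB \<subseteq> ?RA \<or> ?RA \<inter> ?RB = {}"
    by (metis subset_singletonD empty_subsetI order_refl)
qed

theorem lemma15:
  fixes I :: "'i set" and att :: "'i \<Rightarrow> 'a set" and H :: "'a set"
  assumes "cq I att H"
    and "\<exists>i\<in>I. vacuum att i"
  shows "\<not> hard_structure I att H"
proof -
  obtain v where v: "v \<in> I" "vacuum att v"
    using assms(2) by blast
  have "inj_on att I"
    using assms(1) unfolding cq_def by blast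
  have unique_endogenous: "\<And>j. endogenous I att j \<Longrightarrow> j = v"
    using endogenous_imp_eq_vacuum[OF \<open>inj_on att I\<close> v] .
  have unique_non_dominated: "\<And>j. non_dominated I att H j \<Longrightarrow> j = v"
    using non_dominated_imp_eq_vacuum[OF v] .
  have "\<not> triad_like I att H"
    using unique_endogenous by (rule not_triad_like_if_unique_endogenous)
  moreover have "\<not> strand I att H"
    using unique_non_dominated by (rule not_strand_if_unique_non_dominated)
  moreover have "{i\<in>I. non_dominated I att H i} \<subseteq> {v}"
    using unique_non_dominated by blast
  then have "head_join_hierarchical I att H"
    unfolding head_join_hierarchical_def by (rule hierarchical_subsingleton)
  ultimately show ?thesis
    unfolding hard_structure_def by blast
qed

end
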